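(* For every positive integer $n$, the set $[n]=\{1,\dots,n\}$ admits exactly one $2$-good partition.
   Context: For integers $n>0$ and $m>1$, a partition of $[n]=\{1,\dots,n\}$ into nonempty parts is called $m$-good if every part has at most $m$ elements and the sum of the elements of every part is a power of $m$, i.e. equals $m^s$ for some integer $s\ge 0$. Thus a $2$-good partition is a partition of $[n]$ into parts of size $1$ or $2$, each with sum a power of $2$. *)

theory Defs
  imports Main "HOL-Library.Disjoint_Sets"
begin

definition good_partition :: "nat \<Rightarrow> nat \<Rightarrow> nat set set \<Rightarrow> bool" where
  "good_partition m n P \<longleftrightarrow>
     partition_on {1..n} P \<and>
     (\<forall>B\<in>P. card B \<le> m \<and> (\<exists>s::nat. \<Sum>B = m ^ s))"

end

theory Submission
  imports Defs
begin

(* Existence: if 2^k <= n < 2^(k+1) = c, the pairs {j, c - j} for c - n <= j <= n cover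
   {c - n..n} with sums c (or 2^k for the fixed point j = 2^k), and the rest {1..c - n - 1}
   is handled recursively.
   Uniqueness: a block B of a 2-good partition has Max B <= sum B < 2 Max B, so its sum is
   the unique power of two in that interval and B is determined by its maximum. Peeling off
   the block of the largest element, two such partitions coincide. *)

lemma partition_on_Un:
  assumes "partition_on A P" "partition_on B Q" "A \<inter> B = {}"
  shows "partition_on (A \<union> B) (P \<union> Q)"
proof (rule partition_onI)
  show "\<Union>(P \<union> Q) = A \<union> B"
    using assms(1,2) by (auto dest: partition_onD1)
  show "{} \<notin> P \<union> Q"
    using assms(1,2) by (auto dest: partition_onD3)
  have "disjoint (P \<union> Q)"
    using assms partition_onD1[OF assms(1)] partition_onD1[OF assms(2)]
    by (intro disjoint_union) (auto dest: partition_onD2)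
  then show "disjnt p q" if "p \<in> P \<union> Q" "q \<in> P \<union> Q" "p \<noteq> q" for p q
    using that by (auto simp: disjnt_def dest: disjointD)
qed

lemma partition_on_Diff_block:
  assumes "partition_on A P" "B \<in> P"
  shows "partition_on (A - B) (P - {B})"
proof -
  have "disjnt B (\<Union>(P - {B}))"
    using assms partition_onD2[OF assms(1)] by (auto simp: disjnt_def dest: disjointD)
  then show ?thesis
    using partition_on_insert[of B "P - {B}" A] assms by (simp add: insert_absorb)
qed

lemma partition_on_eq_if_Max_blocks_eq:
  fixes A :: "'a::linorder set"
  assumes "finite A" "partition_on A P" "partition_on A Q"
    and "\<And>B B'. B \<in> P \<Longrightarrow> B' \<in> Q \<Longrightarrow> Max B = Max B' \<Longrightarrow> B = B'"
  shows "P = Q"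
  using assms
proof (induction A arbitrary: P Q rule: finite_psubset_induct)
  case (psubset A)
  show ?case
  proof (cases "A = {}")
    case True
    then show ?thesis
      using psubset.prems(1,2) by (simp add: partition_on_empty)
  next
    case False
    define m where "m = Max A"
    have "m \<in> A"
      unfolding m_def using psubset.hyps(1) False by (rule Max_in)
    have Max_block: "Max B = m" if "B \<in> R" "m \<in> B" "partition_on A R" for B R
    proof -
      have "B \<subseteq> A"
        using that partition_onD1 by blast
      then show ?thesis
        using psubset.hyps(1) that(2)
        by (intro Max_eqI) (auto simp: m_def intro: finite_subset)
    qed
    obtain B where B: "B \<in> P" "m \<in> B"
      using \<open>m \<in> A\<close> psubset.prems(1) partition_onD1 by blast
    obtain B' where B': "B' \<in> Q" "m \<in> B'"
      using \<open>m \<in> A\<close> psubset.prems(2) partition_onD1 by blast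
    have "B' = B"
      using psubset.prems(3)[OF B(1) B'(1)] Max_block B B' psubset.prems(1,2) by metis
    have "A - B \<subset> A"
      using B \<open>m \<in> A\<close> by blast
    then have "P - {B} = Q - {B}"
      using psubset.IH partition_on_Diff_block[OF psubset.prems(1) B(1)]
        partition_on_Diff_block[OF psubset.prems(2) B'(1)] \<open>B' = B\<close> psubset.prems(3) by blast
    then show ?thesis
      using B(1) B'(1) \<open>B' = B\<close> by blast
  qed
qed

lemma card_le_1_cases:
  assumes "finite A" "card A \<le> 1"
  obtains "A = {}" | z where "A = {z}"
  using assms by (metis One_nat_def card_1_singletonE card_eq_0_iff le_Suc_eq le_zero_eq)

lemma card_le_1_eq_if_sum_eq:
  fixes R R' :: "nat set"
  assumes "finite R" "card R \<le> 1" "0 \<notin> R" "finite R'" "card R' \<le> 1" "0 \<notin> R'"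
    and "\<Sum>R = \<Sum>R'"
  shows "R = R'"
proof -
  have singleton_if_sum_eq: "A = {z}"
    if "finite A" "card A \<le> 1" "\<Sum>A = z" "0 < z" for A :: "nat set" and z
    using that(1,2) by (cases rule: card_le_1_cases) (use that(3,4) in auto)
  have empty_if_sum_eq_0: "A = {}" if "finite A" "0 \<notin> A" "\<Sum>A = 0" for A :: "nat set"
    using that by (metis ex_in_conv sum_eq_0_iff)
  show ?thesis
  proof (cases "\<Sum>R = 0")
    case True
    then show ?thesis
      using empty_if_sum_eq_0 assms by metis
  next
    case False
    then have "R = {\<Sum>R}" "R' = {\<Sum>R}"
      using singleton_if_sum_eq[OF assms(1,2) refl]
        singleton_if_sum_eq[OF assms(4,5) assms(7)[symmetric]] by simp_all
    then show ?thesis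
      by simp
  qed
qed

lemma Max_le_sum_less_double:
  fixes B :: "nat set"
  assumes "finite B" "B \<noteq> {}" "0 \<notin> B" "card B \<le> 2"
  shows "Max B \<le> \<Sum>B" "\<Sum>B < 2 * Max B"
proof -
  define x where "x = Max B"
  have "x \<in> B"
    unfolding x_def using assms(1,2) by (rule Max_in)
  then have sum_B: "\<Sum>B = x + \<Sum>(B - {x})"
    using assms(1) by (simp add: sum.remove)
  have "0 < x"
    using \<open>x \<in> B\<close> assms(3) by (metis gr0I)
  have "card (B - {x}) \<le> 1"
    using assms(4) \<open>x \<in> B\<close> by simp
  with finite_Diff[OF assms(1)] have "\<Sum>(B - {x}) < x"
  proof (cases rule: card_le_1_cases)
    case 1
    show ?thesis
      unfolding 1 using \<open>0 < x\<close> by simp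
  next
    case (2 z)
    then have "z \<in> B" "z \<noteq> x"
      by auto
    then have "z < x"
      unfolding x_def using assms(1) by (simp add: order.not_eq_order_implies_strict)
    then show ?thesis
      using 2 by simp
  qed
  then show "Max B \<le> \<Sum>B" "\<Sum>B < 2 * Max B"
    using sum_B by (simp_all add: x_def)
qed

lemma power_of_two_unique_in_interval:
  fixes x :: nat
  assumes "x \<le> 2 ^ s" "2 ^ s < 2 * x" "x \<le> 2 ^ t" "2 ^ t < 2 * x"
  shows "s = t"
proof -
  have "(2::nat) ^ s < 2 ^ Suc t" "(2::nat) ^ t < 2 ^ Suc s"
    using assms by simp_all
  then show ?thesis
    using power_strict_increasing_iff[of "2::nat" s "Suc t"]
      power_strict_increasing_iff[of "2::nat" t "Suc s"] by simp
qed

lemma two_good_block_eq_if_Max_eq: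
  fixes B B' :: "nat set"
  assumes B: "finite B" "B \<noteq> {}" "0 \<notin> B" "card B \<le> 2" "\<Sum>B = 2 ^ s"
    and B': "finite B'" "B' \<noteq> {}" "0 \<notin> B'" "card B' \<le> 2" "\<Sum>B' = 2 ^ t"
    and same_Max: "Max B = Max B'"
  shows "B = B'"
proof -
  define x where "x = Max B"
  have "x \<in> B"
    unfolding x_def using B(1,2) by (rule Max_in)
  have "x \<in> B'"
    unfolding x_def same_Max using B'(1,2) by (rule Max_in)
  have "x \<le> 2 ^ s" "2 ^ s < 2 * x"
    using Max_le_sum_less_double[OF B(1-4)] B(5) by (simp_all add: x_def)
  moreover have "x \<le> 2 ^ t" "2 ^ t < 2 * x"
    using Max_le_sum_less_double[OF B'(1-4)] B'(5) by (simp_all add: x_def same_Max)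
  ultimately have "s = t"
    by (rule power_of_two_unique_in_interval)
  then have "\<Sum>(B - {x}) = \<Sum>(B' - {x})"
    using \<open>x \<in> B\<close> \<open>x \<in> B'\<close> B(1,5) B'(1,5) by (simp add: sum_diff1_nat)
  moreover have "card (B - {x}) \<le> 1" "card (B' - {x}) \<le> 1"
    using B(4) B'(4) \<open>x \<in> B\<close> \<open>x \<in> B'\<close> by simp_all
  ultimately have "B - {x} = B' - {x}"
    using B(1,3) B'(1,3) by (intro card_le_1_eq_if_sum_eq) simp_all
  then show ?thesis
    using \<open>x \<in> B\<close> \<open>x \<in> B'\<close> by blast
qed

lemma good_partition_block:
  assumes "good_partition m n P" "B \<in> P"
  shows "finite B" "B \<noteq> {}" "0 \<notin> B" "card B \<le> m" "\<exists>s. \<Sum>B = m ^ s"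
proof -
  have "B \<subseteq> {1..n}"
    using assms partition_onD1 unfolding good_partition_def by blast
  then show "finite B" "0 \<notin> B"
    by (auto intro: finite_subset)
  show "B \<noteq> {}"
    using assms partition_onD3 unfolding good_partition_def by blast
  show "card B \<le> m" "\<exists>s. \<Sum>B = m ^ s"
    using assms unfolding good_partition_def by blast+
qed

lemma good_partition_2_unique:
  assumes "good_partition 2 n P" "good_partition 2 n Q"
  shows "P = Q"
proof (rule partition_on_eq_if_Max_blocks_eq)
  show "finite {1..n}" "partition_on {1..n} P" "partition_on {1..n} Q"
    using assms unfolding good_partition_def by simp_all
  show "B = B'" if B: "B \<in> P" and B': "B' \<in> Q" and "Max B = Max B'" for B B'
  proof -
    obtain s t where "\<Sum>B = 2 ^ s" "\<Sum>B' = 2 ^ t"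
      using good_partition_block(5) assms B B' by meson
    then show ?thesis
      using good_partition_block(1-4)[OF assms(1) B] good_partition_block(1-4)[OF assms(2) B']
        two_good_block_eq_if_Max_eq \<open>Max B = Max B'\<close> by blast
  qed
qed

lemma partition_on_complement_pairs:
  fixes c n :: nat
  assumes "n < c"
  shows "partition_on {c - n..n} ((\<lambda>j. {j, c - j}) ` {c - n..n})"
proof (rule partition_onI)
  show "\<Union>((\<lambda>j. {j, c - j}) ` {c - n..n}) = {c - n..n}"
    using assms by auto
  show "{} \<notin> (\<lambda>j. {j, c - j}) ` {c - n..n}"
    by auto
  show "disjnt p q"
    if "p \<in> (\<lambda>j. {j, c - j}) ` {c - n..n}" "q \<in> (\<lambda>j. {j, c - j}) ` {c - n..n}" "p \<noteq> q"
    for p q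
    using that assms by (auto simp: disjnt_def)
qed

lemma good_partition_2_extend:
  assumes P: "good_partition 2 (2 ^ Suc k - n - 1) P" and "2 ^ k \<le> n" "n < 2 ^ Suc k"
  shows "good_partition 2 n (P \<union> (\<lambda>j. {j, 2 ^ Suc k - j}) ` {2 ^ Suc k - n..n})"
proof -
  define c :: nat where "c = 2 ^ Suc k"
  have "n < c" "c \<le> 2 * n"
    using assms(2,3) by (simp_all add: c_def)
  have "partition_on {1..c - n - 1} P"
    using P unfolding good_partition_def c_def by blast
  then have "partition_on ({1..c - n - 1} \<union> {c - n..n}) (P \<union> (\<lambda>j. {j, c - j}) ` {c - n..n})"
    by (rule partition_on_Un[OF _ partition_on_complement_pairs[OF \<open>n < c\<close>]]) auto
  moreover have "{1..c - n - 1} \<union> {c - n..n} = {1..n}"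
    using \<open>n < c\<close> \<open>c \<le> 2 * n\<close> by auto
  moreover have "card B \<le> 2 \<and> (\<exists>s. \<Sum>B = 2 ^ s)"
    if pair: "B \<in> (\<lambda>j. {j, c - j}) ` {c - n..n}" for B
  proof -
    obtain j where B: "B = {j, c - j}" "j \<in> {c - n..n}"
      using pair by blast
    have "card B \<le> 2"
      unfolding B(1) by (simp add: card_insert_le_m1)
    moreover have "\<Sum>B = 2 ^ k \<or> \<Sum>B = 2 ^ Suc k"
    proof (cases "j = c - j")
      case True
      then have "j = 2 ^ k"
        unfolding c_def by simp
      then show ?thesis
        using B(1) True by simp
    next
      case False
      then have "\<Sum>B = c"
        using B \<open>n < c\<close> by simp
      then show ?thesis
        unfolding c_def by blast
    qed
    ultimately show ?thesis
      by blast
  qed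
  moreover have "card B \<le> 2 \<and> (\<exists>s. \<Sum>B = 2 ^ s)" if "B \<in> P" for B
    using P that unfolding good_partition_def by blast
  ultimately show ?thesis
    unfolding c_def[symmetric] good_partition_def by auto
qed

lemma good_partition_2_exists: "\<exists>P. good_partition 2 n P"
proof (induction n rule: less_induct)
  case (less n)
  show ?case
  proof (cases "n = 0")
    case True
    then show ?thesis
      by (auto simp: good_partition_def partition_on_empty)
  next
    case False
    then obtain k where k: "2 ^ k \<le> n" "n < 2 ^ Suc k"
      using ex_power_ivl1[of 2 n] by auto
    then have "2 ^ Suc k - n - 1 < n"
      by simp
    then obtain P where "good_partition 2 (2 ^ Suc k - n - 1) P"
      using less.IH by blast
    then show ?thesis
      using good_partition_2_extend k by blast
  qed
qed

theorem mainTheorem3: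
  fixes n :: nat
  assumes "n > 0"
  shows "\<exists>!P. good_partition 2 n P"
  using good_partition_2_exists good_partition_2_unique by blast

end
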